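(* Let $\{A,B,C,D\}$ be a Descartes configuration in $\mathbb{R}^2$ in which every disk has integral symbol (all of $\dot x,\dot y$, curvature, co-curvature are integers) and the tangency spinor of each of the six pairs of disks is a Gaussian integer. Then: (a) if $D'$ is the Descartes conjugate of $D$ with respect to $A,B,C$, the Descartes configuration $\{A,B,C,D'\}$ again has integral symbols (indeed the symbols satisfy $\mathbf D+\mathbf D'=2(\mathbf A+\mathbf B+\mathbf C)$ entrywise) and Gaussian-integer tangency spinors for all six pairs; (b) the image of the configuration under inversion in the boundary circle of $A$ — whose disks have symbols $-\mathbf A$, $\mathbf B+2\mathbf A$, $\mathbf C+2\mathbf A$, $\mathbf D+2\mathbf A$ — again has integral symbols and Gaussian-integer tangency spinors for all six pairs.
   Context: A (generalized) disk in $\mathbb{R}^2$ is one of: (i) a closed round disk of radius $r>0$ with center $(x,y)$, curvature $A=1/r$; (ii) the closure of the complement of an open round disk of radius $r>0$ with center $(x,y)$, curvature $A=-1/r$; (iii) a closed half-plane $\{p: p\cdot n\ge h\}$, $|n|=1$, curvature $0$. A disk and its curvature are denoted by the same letter. The symbol of a disk $A$ is the vector $\mathbf A=(\dot x_A,\dot y_A,A,A^c)$ where in cases (i),(ii) $\dot x_A=Ax$, $\dot y_A=Ay$, $A^c=(\dot x_A^2+\dot y_A^2-1)/A$, and in case (iii) $(\dot x_A,\dot y_A)=n$, $A^c=2h$. Two disks are tangent if their interiors are disjoint and their boundaries meet in exactly one point (or they are half-planes with disjoint interiors and parallel boundaries). For tangent disks $A,B$ the tangency spinor is defined up to sign by $\mathrm{spin}(A,B)^2=(A\dot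 x_B-B\dot x_A)+i(A\dot y_B-B\dot y_A)$. A Descartes configuration is a set of four pairwise tangent disks with pairwise disjoint interiors; given three of them, the other disk tangent to all three with interior disjoint from them is the Descartes conjugate of the fourth. *)

theory Defs
  imports "HOL-Analysis.Analysis"
begin

datatype gdisk = Disk complex real | CoDisk complex real | HalfPlane complex real

fun valid_gdisk :: "gdisk \<Rightarrow> bool" where
  "valid_gdisk (Disk c r) = (r > 0)"
| "valid_gdisk (CoDisk c r) = (r > 0)"
| "valid_gdisk (HalfPlane n h) = (norm n = 1)"

fun gset :: "gdisk \<Rightarrow> complex set" where
  "gset (Disk c r) = cball c r"
| "gset (CoDisk c r) = closure (- ball c r)"
| "gset (HalfPlane n h) = {p. inner p n \<ge> h}"

fun curv :: "gdisk \<Rightarrow> real" where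
  "curv (Disk c r) = 1 / r"
| "curv (CoDisk c r) = - 1 / r"
| "curv (HalfPlane n h) = 0"

text \<open>Symbol (xdot, ydot, curvature, co-curvature).\<close>
fun symbol :: "gdisk \<Rightarrow> real \<times> real \<times> real \<times> real" where
  "symbol (Disk c r) =
     (let a = 1 / r; x = a * Re c; y = a * Im c in (x, y, a, (x\<^sup>2 + y\<^sup>2 - 1) / a))"
| "symbol (CoDisk c r) =
     (let a = - 1 / r; x = a * Re c; y = a * Im c in (x, y, a, (x\<^sup>2 + y\<^sup>2 - 1) / a))"
| "symbol (HalfPlane n h) = (Re n, Im n, 0, 2 * h)"

definition xdot :: "gdisk \<Rightarrow> real" where "xdot D = fst (symbol D)"
definition ydot :: "gdisk \<Rightarrow> real" where "ydot D = fst (snd (symbol D))"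

definition integral_symbol :: "gdisk \<Rightarrow> bool" where
  "integral_symbol D \<longleftrightarrow>
     (case symbol D of (x, y, a, ac) \<Rightarrow> x \<in> \<int> \<and> y \<in> \<int> \<and> a \<in> \<int> \<and> ac \<in> \<int>)"

definition is_halfplane :: "gdisk \<Rightarrow> bool" where
  "is_halfplane D \<longleftrightarrow> (\<exists>n h. D = HalfPlane n h)"

fun normal :: "gdisk \<Rightarrow> complex" where
  "normal (HalfPlane n h) = n"
| "normal _ = 0"

definition tangent :: "gdisk \<Rightarrow> gdisk \<Rightarrow> bool" where
  "tangent A B \<longleftrightarrow>
     interior (gset A) \<inter> interior (gset B) = {} \<and>
     ((\<exists>!p. p \<in> frontier (gset A) \<inter> frontier (gset B)) \<or>
      (is_halfplane A \<and> is_halfplane B \<and> (normal B = normal A \<or> normal B = - normal A)))"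

definition descartes_config :: "gdisk \<Rightarrow> gdisk \<Rightarrow> gdisk \<Rightarrow> gdisk \<Rightarrow> bool" where
  "descartes_config A B C D \<longleftrightarrow>
     valid_gdisk A \<and> valid_gdisk B \<and> valid_gdisk C \<and> valid_gdisk D \<and>
     tangent A B \<and> tangent A C \<and> tangent A D \<and>
     tangent B C \<and> tangent B D \<and> tangent C D"

definition descartes_conjugate :: "gdisk \<Rightarrow> gdisk \<Rightarrow> gdisk \<Rightarrow> gdisk \<Rightarrow> gdisk \<Rightarrow> bool" where
  "descartes_conjugate A B C D D' \<longleftrightarrow>
     valid_gdisk D' \<and> tangent A D' \<and> tangent B D' \<and> tangent C D' \<and> gset D' \<noteq> gset D"

text \<open>The square of the tangency spinor spin(A,B).\<close>
definition spin_sq :: "gdisk \<Rightarrow> gdisk \<Rightarrow> complex" where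
  "spin_sq A B = Complex (curv A * xdot B - curv B * xdot A) (curv A * ydot B - curv B * ydot A)"

definition gaussian_int :: "complex \<Rightarrow> bool" where
  "gaussian_int z \<longleftrightarrow> Re z \<in> \<int> \<and> Im z \<in> \<int>"

text \<open>The tangency spinor (defined up to sign) is a Gaussian integer.\<close>
definition gaussian_spinor :: "gdisk \<Rightarrow> gdisk \<Rightarrow> bool" where
  "gaussian_spinor A B \<longleftrightarrow> (\<exists>s. gaussian_int s \<and> s\<^sup>2 = spin_sq A B)"

definition all_spinors_gaussian :: "gdisk \<Rightarrow> gdisk \<Rightarrow> gdisk \<Rightarrow> gdisk \<Rightarrow> bool" where
  "all_spinors_gaussian A B C D \<longleftrightarrow>
     gaussian_spinor A B \<and> gaussian_spinor A C \<and> gaussian_spinor A D \<and>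
     gaussian_spinor B C \<and> gaussian_spinor B D \<and> gaussian_spinor C D"

text \<open>The centre of inversion (mapped to infinity) is removed and
  the image is closed up.\<close>
fun inversion_image :: "gdisk \<Rightarrow> complex set \<Rightarrow> complex set" where
  "inversion_image (Disk c r) S = closure ((\<lambda>p. c + (r\<^sup>2) / cnj (p - c)) ` (S - {c}))"
| "inversion_image (CoDisk c r) S = closure ((\<lambda>p. c + (r\<^sup>2) / cnj (p - c)) ` (S - {c}))"
| "inversion_image (HalfPlane n h) S = (\<lambda>p. p - (2 * (inner p n - h)) *\<^sub>R n) ` S"

end

theory Submission
  imports Defs
begin

text \<open>A generalized disk is encoded by its symbol \<open>(\<dot>x, \<dot>y, a, a\<^sup>c)\<close> in \<open>\<real>\<^sup>4\<close>.
  For the bilinear form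
  \<open>L(t, u) = \<dot>x\<^sub>t \<dot>x\<^sub>u + \<dot>y\<^sub>t \<dot>y\<^sub>u - (a\<^sub>t a\<^sup>c\<^sub>u + a\<^sub>u a\<^sup>c\<^sub>t)/2\<close>,
  every disk has \<open>L(X, X) = 1\<close> and tangent disks have \<open>L(X, Y) = -1\<close>. The Gram matrix
  of a Descartes quadruple is therefore \<open>2I - J\<close>, which is invertible, and the only unit
  vectors with product \<open>-1\<close> against \<open>A, B, C\<close> are \<open>D\<close> and \<open>2(A + B + C) - D\<close>.
  Inversion in the boundary of \<open>A\<close> acts on symbols as the reflection
  \<open>X \<mapsto> X - 2 L(A, X) A\<close>, which sends \<open>A\<close> to \<open>-A\<close> and a disk tangent to \<open>A\<close> to
  \<open>X + 2A\<close>. Integrality of the new symbols is then immediate.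

  For the spinors, the squared spinors \<open>s(P, X)\<close> of a Descartes triple satisfy
  \<open>(s(X, Y) - s(P, X) + s(P, Y))\<^sup>2 = -4 s(P, X) s(P, Y)\<close>, so
  \<open>s(X, Y) = u\<^sup>2 - v\<^sup>2 \<plusminus> 2iuv\<close> for square roots \<open>u, v\<close> of \<open>s(P, X), s(P, Y)\<close>;
  together with the Pluecker relation this gives \<open>s(P, Z) = (u \<plusminus> v)\<^sup>2\<close> in a Descartes
  quadruple. Hence the new squared spinors are \<open>(u \<mp> v)\<^sup>2\<close> for the conjugate disk and
  \<open>-u\<^sup>2\<close>, \<open>(iu \<plusminus> v)\<^sup>2\<close> after inversion: squares of Gaussian integers whenever
  \<open>u\<close> and \<open>v\<close> are.\<close>

section \<open>Symbol vectors and the Lorentz form\<close>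

type_synonym svec = "real \<times> real \<times> real \<times> real"

definition sx :: "svec \<Rightarrow> real" where "sx t = fst t"
definition sy :: "svec \<Rightarrow> real" where "sy t = fst (snd t)"
definition sa :: "svec \<Rightarrow> real" where "sa t = fst (snd (snd t))"
definition sac :: "svec \<Rightarrow> real" where "sac t = snd (snd (snd t))"

definition sxy :: "svec \<Rightarrow> complex" where "sxy t = Complex (sx t) (sy t)"

text \<open>\<open>lorentz\<close> is the polar form of the Descartes quadratic form; \<open>spinsq (symbol A) (symbol B)\<close>
  is \<open>spin(A, B)\<^sup>2\<close>.\<close>

definition lorentz :: "svec \<Rightarrow> svec \<Rightarrow> real" where
  "lorentz t u = sx t * sx u + sy t * sy u - (sa t * sac u + sa u * sac t) / 2"

definition spinsq :: "svec \<Rightarrow> svec \<Rightarrow> complex" where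
  "spinsq t u = of_real (sa t) * sxy u - of_real (sa u) * sxy t"

definition descartes_triple :: "svec \<Rightarrow> svec \<Rightarrow> svec \<Rightarrow> bool" where
  "descartes_triple p x y \<longleftrightarrow>
     lorentz p p = 1 \<and> lorentz x x = 1 \<and> lorentz y y = 1 \<and>
     lorentz p x = -1 \<and> lorentz p y = -1 \<and> lorentz x y = -1"

definition descartes_quad :: "svec \<Rightarrow> svec \<Rightarrow> svec \<Rightarrow> svec \<Rightarrow> bool" where
  "descartes_quad p x y z \<longleftrightarrow>
     descartes_triple p x y \<and> lorentz z z = 1 \<and> lorentz p z = -1 \<and> lorentz x z = -1 \<and> lorentz y z = -1"

lemma svec_eq_iff: "t = u \<longleftrightarrow> sx t = sx u \<and> sy t = sy u \<and> sa t = sa u \<and> sac t = sac u"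
  by (cases t; cases u) (auto simp: sx_def sy_def sa_def sac_def)

lemma svec_coords_simps [simp]:
  "sx (x, y, a, ac) = x" "sy (x, y, a, ac) = y" "sa (x, y, a, ac) = a" "sac (x, y, a, ac) = ac"
  "sx (t + u) = sx t + sx u" "sy (t + u) = sy t + sy u" "sa (t + u) = sa t + sa u" "sac (t + u) = sac t + sac u"
  "sx (t - u) = sx t - sx u" "sy (t - u) = sy t - sy u" "sa (t - u) = sa t - sa u" "sac (t - u) = sac t - sac u"
  "sx (- t) = - sx t" "sy (- t) = - sy t" "sa (- t) = - sa t" "sac (- t) = - sac t"
  "sx (k *\<^sub>R t) = k * sx t" "sy (k *\<^sub>R t) = k * sy t" "sa (k *\<^sub>R t) = k * sa t" "sac (k *\<^sub>R t) = k * sac t"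
  "sx 0 = 0" "sy 0 = 0" "sa 0 = 0" "sac 0 = 0"
  by (simp_all add: sx_def sy_def sa_def sac_def)

lemma sxy_simps [simp]: "sxy (t + u) = sxy t + sxy u" "sxy (t - u) = sxy t - sxy u" "sxy (- t) = - sxy t"
  "sxy (k *\<^sub>R t) = of_real k * sxy t"
  by (simp_all add: sxy_def complex_eq_iff)

lemma lorentz_commute: "lorentz t u = lorentz u t"
  by (simp add: lorentz_def algebra_simps)

lemma lorentz_simps [simp]:
  "lorentz (t + u) v = lorentz t v + lorentz u v" "lorentz (t - u) v = lorentz t v - lorentz u v"
  "lorentz (- t) v = - lorentz t v" "lorentz (k *\<^sub>R t) v = k * lorentz t v"
  "lorentz v (t + u) = lorentz v t + lorentz v u" "lorentz v (t - u) = lorentz v t - lorentz v u"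
  "lorentz v (- t) = - lorentz v t" "lorentz v (k *\<^sub>R t) = k * lorentz v t"
  "lorentz 0 v = 0" "lorentz v 0 = 0"
  by (simp_all add: lorentz_def field_simps)

lemma spinsq_simps [simp]:
  "spinsq t (u + v) = spinsq t u + spinsq t v" "spinsq t (u - v) = spinsq t u - spinsq t v"
  "spinsq t (k *\<^sub>R u) = of_real k * spinsq t u" "spinsq t (- u) = - spinsq t u"
  "spinsq (u + v) t = spinsq u t + spinsq v t" "spinsq (u - v) t = spinsq u t - spinsq v t"
  "spinsq (k *\<^sub>R u) t = of_real k * spinsq u t" "spinsq (- u) t = - spinsq u t"
  "spinsq t t = 0"
  by (simp_all add: spinsq_def algebra_simps)

lemma spinsq_antisym: "spinsq t u = - spinsq u t"
  by (simp add: spinsq_def)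

lemma descartes_triple_commute:
  "descartes_triple p x y \<Longrightarrow> descartes_triple x p y"
  "descartes_triple p x y \<Longrightarrow> descartes_triple p y x"
  by (auto simp: descartes_triple_def lorentz_commute)

lemma descartes_quad_triples:
  assumes "descartes_quad p x y z"
  shows "descartes_triple p x y" "descartes_triple p x z" "descartes_triple p y z"
  using assms by (auto simp: descartes_quad_def descartes_triple_def lorentz_commute)

lemma descartes_quad_commute:
  "descartes_quad p x y z \<Longrightarrow> descartes_quad x p y z"
  "descartes_quad p x y z \<Longrightarrow> descartes_quad p y x z"
  "descartes_quad p x y z \<Longrightarrow> descartes_quad p z x y"
  by (auto simp: descartes_quad_def descartes_triple_def lorentz_commute)

section \<open>Identities for squared spinors\<close>

lemma spinsq_mult_cnj:
  assumes "lorentz t t = 1" "lorentz u u = 1" "lorentz t u = -1"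
  shows "spinsq t u * cnj (spinsq t u) = of_real ((sa t + sa u)^2)"
proof -
  have "(sa t * sx u - sa u * sx t)^2 + (sa t * sy u - sa u * sy t)^2 - (sa t + sa u)^2
     = (sa t)^2 * (lorentz u u - 1) + (sa u)^2 * (lorentz t t - 1) - 2 * sa t * sa u * (lorentz t u + 1)"
    by (simp add: lorentz_def) algebra
  moreover have "spinsq t u = Complex (sa t * sx u - sa u * sx t) (sa t * sy u - sa u * sy t)"
    by (simp add: spinsq_def sxy_def complex_eq_iff)
  ultimately show ?thesis using assms by (simp add: complex_mult_cnj)
qed

lemma spinsq_cross:
  assumes "descartes_triple p x y"
  shows "spinsq p x * cnj (spinsq p y) + cnj (spinsq p x) * spinsq p y
       = of_real (2 * (sa p * sa x + sa p * sa y + sa x * sa y - (sa p)^2))"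
proof -
  let ?X = "(sa p * sx x - sa x * sx p) * (sa p * sx y - sa y * sx p) + (sa p * sy x - sa x * sy p) * (sa p * sy y - sa y * sy p)"
  have "?X - (sa p * sa x + sa p * sa y + sa x * sa y - (sa p)^2)
    = (sa p)^2 * (lorentz x y + 1) - sa p * sa y * (lorentz p x + 1) - sa p * sa x * (lorentz p y + 1)
      + sa x * sa y * (lorentz p p - 1)"
    by (simp add: lorentz_def) algebra
  then have "?X = sa p * sa x + sa p * sa y + sa x * sa y - (sa p)^2"
    using assms by (simp add: descartes_triple_def)
  moreover have "spinsq p x * cnj (spinsq p y) + cnj (spinsq p x) * spinsq p y = of_real (2 * ?X)"
    by (simp add: spinsq_def sxy_def complex_eq_iff algebra_simps)
  ultimately show ?thesis by simp
qed

lemma spinsq_pivot: "of_real (sa p) * spinsq x y = of_real (sa x) * spinsq p y - of_real (sa y) * spinsq p x"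
  by (simp add: spinsq_def algebra_simps)

lemma spinsq_pluecker: "spinsq p x * spinsq y z - spinsq p y * spinsq x z + spinsq p z * spinsq x y = 0"
  by (simp add: spinsq_def algebra_simps)

lemma pivot_relation:
  fixes Sa Sb Sc :: complex and p x y :: real
  assumes "of_real p * Sc = of_real x * Sb - of_real y * Sa"
    "Sa * cnj Sa = of_real ((p + x)^2)" "Sb * cnj Sb = of_real ((p + y)^2)"
    "Sa * cnj Sb + cnj Sa * Sb = of_real (2 * (p*x + p*y + x*y - p^2))"
  shows "of_real (p^2) * ((Sc - Sa + Sb)^2 + 4 * Sa * Sb) = 0"
proof -
  have "of_real (p^2) * ((Sc - Sa + Sb)^2 + 4 * Sa * Sb)
      = (of_real p * Sc - of_real p * Sa + of_real p * Sb)^2 + 4 * of_real (p^2) * Sa * Sb"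
    by (simp add: algebra_simps power2_eq_square)
  also have "\<dots> = (of_real x * Sb - of_real y * Sa - of_real p * Sa + of_real p * Sb)^2 + 4 * of_real (p^2) * Sa * Sb"
    using assms(1) by simp
  also have "\<dots> = Sb^2 * (of_real ((p + x)^2) - Sa * cnj Sa) + Sa^2 * (of_real ((p + y)^2) - Sb * cnj Sb)
      + Sa * Sb * (Sa * cnj Sb + cnj Sa * Sb - of_real (2 * (p*x + p*y + x*y - p^2)))"
    by (simp add: algebra_simps power2_eq_square)
  also have "\<dots> = 0" using assms(2-4) by simp
  finally show ?thesis .
qed

lemma spinsq_triangle_scaled:
  assumes "descartes_triple p x y"
  shows "of_real ((sa p)^2) * ((spinsq x y - spinsq p x + spinsq p y)^2 + 4 * spinsq p x * spinsq p y) = 0"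
  using assms
  by (intro pivot_relation[OF spinsq_pivot spinsq_mult_cnj spinsq_mult_cnj spinsq_cross])
    (auto simp: descartes_triple_def)

lemma descartes_triple_curv_sq_nonzero:
  assumes "descartes_triple p x y"
  shows "(sa p)^2 + (sa x)^2 + (sa y)^2 \<noteq> 0"
proof
  have n: "lorentz p p = 1" "lorentz x x = 1" "lorentz y y = 1" "lorentz p x = -1" "lorentz p y = -1"
    "lorentz x y = -1" using assms by (auto simp: descartes_triple_def)
  assume "(sa p)^2 + (sa x)^2 + (sa y)^2 = 0"
  then have z: "sa p = 0" "sa x = 0" "sa y = 0" by (auto simp: power2_eq_square add_nonneg_eq_0_iff)
  have "(sx p + sx q)^2 + (sy p + sy q)^2 = lorentz p p + lorentz q q + 2 * lorentz p q" if "sa q = 0" for q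
    using z that by (simp add: lorentz_def power2_eq_square algebra_simps)
  from this[of x] this[of y] have "(sx p + sx x)^2 + (sy p + sy x)^2 = 0" "(sx p + sx y)^2 + (sy p + sy y)^2 = 0"
    using n z by simp_all
  then have "sx x = - sx p" "sy x = - sy p" "sx y = - sx p" "sy y = - sy p"
    by (auto simp: power2_eq_square add_nonneg_eq_0_iff)
  then have "lorentz x y = lorentz p p" using z by (simp add: lorentz_def)
  then show False using n by simp
qed

lemma spinsq_triangle:
  assumes "descartes_triple p x y"
  shows "(spinsq x y - spinsq p x + spinsq p y)^2 = -4 * spinsq p x * spinsq p y"
proof -
  let ?F = "\<lambda>p x y. (spinsq x y - spinsq p x + spinsq p y)^2 + 4 * spinsq p x * spinsq p y"
  have rotate: "?F x y p = ?F p x y" "?F y p x = ?F p x y"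
    by (simp_all add: spinsq_antisym[of p] spinsq_antisym[of x y] algebra_simps power2_eq_square)
  \<comment> \<open>The pivot relation only yields \<open>?F\<close> times the squared curvature of the pivot; rotating
    the pivot removes the factor, since the three curvatures cannot all vanish.\<close>
  have "of_real ((sa p)^2) * ?F p x y = 0" "of_real ((sa x)^2) * ?F p x y = 0"
    "of_real ((sa y)^2) * ?F p x y = 0"
    using spinsq_triangle_scaled[OF assms]
      spinsq_triangle_scaled[OF descartes_triple_commute(1)[OF descartes_triple_commute(2)[OF assms]]]
      spinsq_triangle_scaled[OF descartes_triple_commute(2)[OF descartes_triple_commute(1)[OF assms]]]
    unfolding rotate by auto
  then have "?F p x y = 0"
    using descartes_triple_curv_sq_nonzero[OF assms] by auto
  then show ?thesis by (simp add: eq_neg_iff_add_eq_0 algebra_simps)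
qed

lemma square_eq_square_sign: "(a::complex)^2 = b^2 \<Longrightarrow> \<exists>e. (e = 1 \<or> e = -1) \<and> a = e * b"
  by (metis mult_1 mult_minus1 power2_eq_iff)

lemma spinsq_triangle_root:
  assumes "descartes_triple p x y" "u^2 = spinsq p x" "v^2 = spinsq p y"
  obtains e where "e = 1 \<or> e = -1" "spinsq x y = u^2 - v^2 + e * (2 * \<i> * u * v)"
proof -
  have "(spinsq x y - u^2 + v^2)^2 = (2 * \<i> * u * v)^2"
    using spinsq_triangle[OF assms(1)] assms(2,3) by (simp add: power_mult_distrib)
  then obtain e where "e = 1 \<or> e = -1" "spinsq x y - u^2 + v^2 = e * (2 * \<i> * u * v)"
    using square_eq_square_sign by blast
  then show ?thesis by (intro that[of e]) (auto simp: algebra_simps)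
qed

lemma descartes_quad_spinsq_eq_of_zero:
  assumes quad: "descartes_quad p x y z" and zero: "spinsq p x = 0"
  shows "spinsq p y = spinsq p z"
proof -
  have n: "lorentz p p = 1" "lorentz x x = 1" "lorentz p x = -1" "lorentz p y = -1" "lorentz p z = -1"
    "lorentz x y = -1" "lorentz x z = -1"
    using quad by (auto simp: descartes_quad_def descartes_triple_def)
  have "of_real ((sa p + sa x)^2) = (0::complex)"
    using spinsq_mult_cnj[OF n(1-3)] zero by simp
  then have ax: "sa x = - sa p" by (simp only: of_real_eq_0_iff) simp
  have a0: "sa p = 0"
  proof (rule ccontr)
    assume a: "sa p \<noteq> 0"
    have "sa p * (sx x + sx p) = 0" "sa p * (sy x + sy p) = 0"
      using zero ax by (auto simp: spinsq_def sxy_def complex_eq_iff algebra_simps)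
    then have v: "sx x = - sx p" "sy x = - sy p" using a by auto
    have "sa p * (sac x + sac p) = lorentz x x - lorentz p p" using v ax by (simp add: lorentz_def algebra_simps)
    then have "sac x = - sac p" using a n by simp
    then have "lorentz x y = - lorentz p y" using v ax by (simp add: lorentz_def field_simps)
    then show False using n by simp
  qed
  have "(sx p + sx x)^2 + (sy p + sy x)^2 = lorentz p p + lorentz x x + 2 * lorentz p x"
    using a0 ax by (simp add: lorentz_def power2_eq_square algebra_simps)
  then have v: "sx x = - sx p" "sy x = - sy p" using n by (auto simp: power2_eq_square add_nonneg_eq_0_iff)
  have "sa q * (sac p + sac x) = - 2 * (lorentz p q + lorentz x q)" for q
    using v a0 ax by (simp add: lorentz_def algebra_simps)
  then have "sa y * (sac p + sac x) = 4" "sa z * (sac p + sac x) = 4" using n by simp_all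
  then have "sa y = sa z" by (metis mult_right_cancel zero_neq_numeral mult_zero_right)
  then show ?thesis using a0 by (simp add: spinsq_def)
qed

lemma spinsq_fourth_square_nonzero:
  assumes quad: "descartes_quad p x y z"
    and u: "u^2 = spinsq p x" and v: "v^2 = spinsq p y" and w: "w^2 = spinsq p z"
    and nz: "u \<noteq> 0" "v \<noteq> 0" "w \<noteq> 0"
  obtains e where "e = 1 \<or> e = -1" "spinsq p z = (u + e * v)^2"
proof -
  note triples = descartes_quad_triples[OF quad]
  obtain e1 where e1: "e1 = 1 \<or> e1 = -1" "spinsq x y = u^2 - v^2 + e1 * (2 * \<i> * u * v)"
    using spinsq_triangle_root[OF triples(1) u v] .
  obtain e2 where e2: "e2 = 1 \<or> e2 = -1" "spinsq x z = u^2 - w^2 + e2 * (2 * \<i> * u * w)"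
    using spinsq_triangle_root[OF triples(2) u w] .
  obtain e3 where e3: "e3 = 1 \<or> e3 = -1" "spinsq y z = v^2 - w^2 + e3 * (2 * \<i> * v * w)"
    using spinsq_triangle_root[OF triples(3) v w] .
  \<comment> \<open>The Pluecker relation forces the three sign choices to be compatible.\<close>
  have "0 = spinsq p x * spinsq y z - spinsq p y * spinsq x z + spinsq p z * spinsq x y"
    using spinsq_pluecker by simp
  also have "\<dots> = u^2 * (v^2 - w^2 + e3 * (2 * \<i> * v * w)) - v^2 * (u^2 - w^2 + e2 * (2 * \<i> * u * w))
      + w^2 * (u^2 - v^2 + e1 * (2 * \<i> * u * v))"
    using u v w e1 e2 e3 by simp
  also have "\<dots> = (2 * \<i> * u * v * w) * (e3 * u - e2 * v + e1 * w)"
    by (simp add: algebra_simps power2_eq_square)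
  finally have "e3 * u - e2 * v + e1 * w = 0" using nz by simp
  then have "e1 * w = e2 * v - e3 * u" by (simp add: algebra_simps)
  then have "(e1 * w)^2 = (e2 * v - e3 * u)^2" by simp
  moreover have "(e1 * w)^2 = w^2" using e1(1) by (auto simp: power2_eq_square)
  moreover have "(e2 * v - e3 * u)^2 = (u + (- e2 * e3) * v)^2"
    using e2(1) e3(1) by (auto simp: power2_eq_square algebra_simps)
  moreover have "- e2 * e3 = 1 \<or> - e2 * e3 = -1" using e2(1) e3(1) by auto
  ultimately show ?thesis using w that by metis
qed

lemma spinsq_fourth_square:
  assumes quad: "descartes_quad p x y z" and u: "u^2 = spinsq p x" and v: "v^2 = spinsq p y"
  obtains e where "e = 1 \<or> e = -1" "spinsq p z = (u + e * v)^2"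
proof (cases "u = 0 \<or> v = 0 \<or> spinsq p z = 0")
  case True
  then show ?thesis
  proof (elim disjE)
    assume "u = 0"
    then have "spinsq p y = spinsq p z"
      using u descartes_quad_spinsq_eq_of_zero[OF quad] by simp
    then show ?thesis using \<open>u = 0\<close> v that[of 1] by simp
  next
    assume "v = 0"
    then have "spinsq p x = spinsq p z"
      using v descartes_quad_spinsq_eq_of_zero[OF descartes_quad_commute(2)[OF quad]] by simp
    then show ?thesis using \<open>v = 0\<close> u that[of 1] by simp
  next
    assume z: "spinsq p z = 0"
    then have "u^2 = v^2"
      using u v descartes_quad_spinsq_eq_of_zero[OF descartes_quad_commute(3)[OF quad]] by simp
    then obtain e where e: "e = 1 \<or> e = -1" "u = e * v" using square_eq_square_sign by blast
    then show ?thesis using z that[of "-e"] by (auto simp: algebra_simps)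
  qed
next
  case False
  then show ?thesis
    using spinsq_fourth_square_nonzero[OF quad u v power2_csqrt] that by auto
qed

lemma descartes_quad_lorentz:
  assumes "descartes_quad a b c d"
  shows "lorentz a a = 1" "lorentz b b = 1" "lorentz c c = 1" "lorentz d d = 1"
    "lorentz a b = -1" "lorentz a c = -1" "lorentz a d = -1"
    "lorentz b c = -1" "lorentz b d = -1" "lorentz c d = -1"
    "lorentz b a = -1" "lorentz c a = -1" "lorentz d a = -1"
    "lorentz c b = -1" "lorentz d b = -1" "lorentz d c = -1"
  using assms by (auto simp: descartes_quad_def descartes_triple_def lorentz_commute)

lemma descartes_quad_spans:
  assumes quad: "descartes_quad a b c d"
  obtains k l m n where "e = k *\<^sub>R a + l *\<^sub>R b + m *\<^sub>R c + n *\<^sub>R d"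
proof -
  note L = descartes_quad_lorentz[OF quad]
  let ?S = "{a, b, c, d}"
  have distinct: "a \<noteq> b" "a \<noteq> c" "a \<noteq> d" "b \<noteq> c" "b \<noteq> d" "c \<noteq> d" using L by auto
  have sum_S: "(\<Sum>v\<in>?S. f v *\<^sub>R v) = f a *\<^sub>R a + f b *\<^sub>R b + f c *\<^sub>R c + f d *\<^sub>R d" for f
    using distinct by (simp add: algebra_simps)
  \<comment> \<open>The Gram matrix \<open>2I - J\<close> of the quadruple is invertible.\<close>
  have "independent ?S"
  proof
    assume "dependent ?S"
    then obtain f where f: "\<exists>v\<in>?S. f v \<noteq> 0" "f a *\<^sub>R a + f b *\<^sub>R b + f c *\<^sub>R c + f d *\<^sub>R d = 0"
      using dependent_finite[of ?S] sum_S by auto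
    from arg_cong[OF f(2), of "\<lambda>t. lorentz t a"] arg_cong[OF f(2), of "\<lambda>t. lorentz t b"]
      arg_cong[OF f(2), of "\<lambda>t. lorentz t c"] arg_cong[OF f(2), of "\<lambda>t. lorentz t d"]
    have "f a - f b - f c - f d = 0" "- f a + f b - f c - f d = 0" "- f a - f b + f c - f d = 0"
      "- f a - f b - f c + f d = 0"
      using L by simp_all
    then have "f a = 0" "f b = 0" "f c = 0" "f d = 0" by linarith+
    then show False using f(1) by auto
  qed
  moreover have "card ?S = DIM(svec)" using distinct by simp
  ultimately have "e \<in> span ?S" using card_ge_dim_independent[of ?S UNIV] by auto
  then show ?thesis using that span_finite[of ?S] sum_S by auto
qed

lemma descartes_quad_fourth_cases:
  assumes quad: "descartes_quad a b c d"
    and e: "lorentz e e = 1" "lorentz a e = -1" "lorentz b e = -1" "lorentz c e = -1"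
  shows "e = d \<or> e = 2 *\<^sub>R (a + b + c) - d"
proof -
  note L = descartes_quad_lorentz[OF quad]
  obtain k l m n where eq: "e = k *\<^sub>R a + l *\<^sub>R b + m *\<^sub>R c + n *\<^sub>R d"
    using descartes_quad_spans[OF quad] .
  have "k - l - m - n = -1" "- k + l - m - n = -1" "- k - l + m - n = -1"
    using e(2-4) L unfolding eq by simp_all
  then have lmn: "l = k" "m = k" "n = 1 - k" by linarith+
  have "lorentz e e = (n - k - l - m) * (n - k - l - m) - 4 * (k * l + k * m + l * m)"
    unfolding eq using L by (simp add: algebra_simps)
  then have "k * (k - 2) = 0" using e(1) lmn by (simp add: algebra_simps)
  then consider "k = 0" | "k = 2" by auto
  then show ?thesis
  proof cases
    case 1
    then show ?thesis using eq lmn by simp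
  next
    case 2
    then show ?thesis using eq lmn by (simp add: algebra_simps scaleR_add_right)
  qed
qed

section \<open>Gaussian squares\<close>

definition gaussian_square :: "complex \<Rightarrow> bool" where
  "gaussian_square z \<longleftrightarrow> (\<exists>s. gaussian_int s \<and> s^2 = z)"

definition all_spinsq_gaussian :: "svec \<Rightarrow> svec \<Rightarrow> svec \<Rightarrow> svec \<Rightarrow> bool" where
  "all_spinsq_gaussian a b c d \<longleftrightarrow>
     gaussian_square (spinsq a b) \<and> gaussian_square (spinsq a c) \<and> gaussian_square (spinsq a d) \<and>
     gaussian_square (spinsq b c) \<and> gaussian_square (spinsq b d) \<and> gaussian_square (spinsq c d)"

lemma gaussian_int_add: "gaussian_int u \<Longrightarrow> gaussian_int v \<Longrightarrow> gaussian_int (u + v)"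
  and gaussian_int_diff: "gaussian_int u \<Longrightarrow> gaussian_int v \<Longrightarrow> gaussian_int (u - v)"
  and gaussian_int_mult_ii: "gaussian_int u \<Longrightarrow> gaussian_int (\<i> * u)"
  and gaussian_int_mult_sign: "e = 1 \<or> e = -1 \<Longrightarrow> gaussian_int u \<Longrightarrow> gaussian_int (e * u)"
  by (auto simp: gaussian_int_def)

lemma gaussian_square_uminus: "gaussian_square z \<Longrightarrow> gaussian_square (- z)"
  unfolding gaussian_square_def
  by (metis gaussian_int_mult_ii power2_i power_mult_distrib mult_minus1)

lemma gaussian_square_spinsq_commute: "gaussian_square (spinsq t u) \<Longrightarrow> gaussian_square (spinsq u t)"
  using gaussian_square_uminus spinsq_antisym by metis

lemma gaussian_square_conjugate:
  assumes quad: "descartes_quad p x y z"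
    and gx: "gaussian_square (spinsq p x)" and gy: "gaussian_square (spinsq p y)"
  shows "gaussian_square (spinsq p (2 *\<^sub>R (p + x + y) - z))"
proof -
  obtain u v where u: "gaussian_int u" "u^2 = spinsq p x" and v: "gaussian_int v" "v^2 = spinsq p y"
    using gx gy by (auto simp: gaussian_square_def)
  obtain e where e: "e = 1 \<or> e = -1" "spinsq p z = (u + e * v)^2"
    using spinsq_fourth_square[OF quad u(2) v(2)] .
  have "spinsq p (2 *\<^sub>R (p + x + y) - z) = 2 * u^2 + 2 * v^2 - (u + e * v)^2"
    using u(2) v(2) e(2) by (simp add: scaleR_add_right)
  also have "\<dots> = (u - e * v)^2" using e(1) by (auto simp: power2_eq_square algebra_simps)
  finally show ?thesis
    using gaussian_int_diff[OF u(1) gaussian_int_mult_sign[OF e(1) v(1)]] by (auto simp: gaussian_square_def)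
qed

lemma gaussian_square_inversion:
  assumes triple: "descartes_triple p x y"
    and gx: "gaussian_square (spinsq p x)" and gy: "gaussian_square (spinsq p y)"
  shows "gaussian_square (spinsq (x + 2 *\<^sub>R p) (y + 2 *\<^sub>R p))"
proof -
  obtain u v where u: "gaussian_int u" "u^2 = spinsq p x" and v: "gaussian_int v" "v^2 = spinsq p y"
    using gx gy by (auto simp: gaussian_square_def)
  obtain e where e: "e = 1 \<or> e = -1" "spinsq x y = u^2 - v^2 + e * (2 * \<i> * u * v)"
    using spinsq_triangle_root[OF triple u(2) v(2)] .
  have "spinsq (x + 2 *\<^sub>R p) (y + 2 *\<^sub>R p) = spinsq x y - 2 * spinsq p x + 2 * spinsq p y"
    by (simp add: spinsq_antisym[of x p])
  also have "\<dots> = (\<i> * u + e * v)^2"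
    using u(2) v(2) e by (auto simp: power2_eq_square algebra_simps)
  finally show ?thesis
    using gaussian_int_add[OF gaussian_int_mult_ii[OF u(1)] gaussian_int_mult_sign[OF e(1) v(1)]]
    by (auto simp: gaussian_square_def)
qed

lemma all_spinsq_gaussian_conjugate:
  assumes quad: "descartes_quad a b c d" and g: "all_spinsq_gaussian a b c d"
  shows "all_spinsq_gaussian a b c (2 *\<^sub>R (a + b + c) - d)"
proof -
  have "2 *\<^sub>R (a + b + c) - d = 2 *\<^sub>R (b + a + c) - d" "2 *\<^sub>R (a + b + c) - d = 2 *\<^sub>R (c + a + b) - d"
    by (simp_all add: algebra_simps)
  moreover have "descartes_quad b a c d" "descartes_quad c a b d"
    using descartes_quad_commute quad by blast+
  ultimately show ?thesis
    using g gaussian_square_conjugate[OF quad] gaussian_square_conjugate[of b a c d]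
      gaussian_square_conjugate[of c a b d] gaussian_square_spinsq_commute
    unfolding all_spinsq_gaussian_def by metis
qed

lemma all_spinsq_gaussian_inversion:
  assumes quad: "descartes_quad a b c d" and g: "all_spinsq_gaussian a b c d"
  shows "all_spinsq_gaussian (- a) (b + 2 *\<^sub>R a) (c + 2 *\<^sub>R a) (d + 2 *\<^sub>R a)"
proof -
  have "spinsq (- a) (x + 2 *\<^sub>R a) = - spinsq a x" for x by simp
  then show ?thesis
    using g gaussian_square_uminus descartes_quad_triples[OF quad]
      gaussian_square_inversion[of a b c] gaussian_square_inversion[of a b d]
      gaussian_square_inversion[of a c d]
    unfolding all_spinsq_gaussian_def by metis
qed

section \<open>Symbols of generalized disks\<close>

lemma symbol_CoDisk: "symbol (CoDisk c r) = - symbol (Disk c r)"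
  by (simp add: svec_eq_iff Let_def power2_eq_square field_simps)

lemma curv_eq_sa: "curv A = sa (symbol A)"
  by (cases A) (simp_all add: Let_def)

lemma spin_sq_eq_spinsq: "spin_sq A B = spinsq (symbol A) (symbol B)"
  by (simp add: spin_sq_def spinsq_def sxy_def curv_eq_sa xdot_def ydot_def sx_def sy_def complex_eq_iff)

lemma all_spinors_gaussian_iff:
  "all_spinors_gaussian A B C D \<longleftrightarrow> all_spinsq_gaussian (symbol A) (symbol B) (symbol C) (symbol D)"
  by (simp add: all_spinors_gaussian_def all_spinsq_gaussian_def gaussian_spinor_def
      gaussian_square_def spin_sq_eq_spinsq eq_commute)

lemma integral_symbol_iff:
  "integral_symbol X \<longleftrightarrow>
     sx (symbol X) \<in> \<int> \<and> sy (symbol X) \<in> \<int> \<and> sa (symbol X) \<in> \<int> \<and> sac (symbol X) \<in> \<int>"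
  by (simp add: integral_symbol_def sx_def sy_def sa_def sac_def split: prod.split)

lemma lorentz_symbol_self: "valid_gdisk X \<Longrightarrow> lorentz (symbol X) (symbol X) = 1"
proof (induction X rule: valid_gdisk.induct)
  case (3 n h)
  then have "(Re n)^2 + (Im n)^2 = 1" by (simp add: cmod_power2[symmetric])
  then show ?case by (simp add: lorentz_def power2_eq_square)
qed (auto simp: lorentz_def Let_def power2_eq_square field_simps)

text \<open>For a round disk, \<open>disk_power t p\<close> is the power of \<open>p\<close> with respect to the boundary
  circle, multiplied by the curvature \<open>sa t\<close>.\<close>

definition disk_power :: "svec \<Rightarrow> complex \<Rightarrow> real" where
  "disk_power t p = sa t * ((Re p)^2 + (Im p)^2) - 2 * (sx t * Re p + sy t * Im p) + sac t"

lemma gset_CoDisk [simp]: "gset (CoDisk c r) = - ball c r"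
  by (simp add: closed_Compl)

declare gset.simps(2) [simp del]

lemma dist_sq_coords: "(dist c p)^2 = (Re p - Re c)^2 + (Im p - Im c)^2"
  by (simp add: dist_norm cmod_power2 power2_commute)

lemma gset_eq_disk_power: "valid_gdisk X \<Longrightarrow> gset X = {p. disk_power (symbol X) p \<le> 0}"
proof (induction X rule: valid_gdisk.induct)
  case (1 c r)
  have "disk_power (symbol (Disk c r)) p = ((dist c p)^2 - r^2) / r" for p
    using 1 unfolding dist_sq_coords by (simp add: disk_power_def Let_def power2_eq_square field_simps)
  moreover have "dist c p \<le> r \<longleftrightarrow> (dist c p)^2 \<le> r^2" for p
    using 1 by (simp add: abs_le_square_iff[symmetric])
  ultimately show ?case using 1 by (auto simp: divide_le_0_iff)
next
  case (2 c r)
  have "disk_power (symbol (CoDisk c r)) p = (r^2 - (dist c p)^2) / r" for p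
    using 2 unfolding dist_sq_coords by (simp add: disk_power_def Let_def power2_eq_square field_simps)
  moreover have "r \<le> dist c p \<longleftrightarrow> r^2 \<le> (dist c p)^2" for p
    using 2 by (simp add: abs_le_square_iff[symmetric])
  ultimately show ?case using 2 by (auto simp: divide_le_0_iff)
qed (auto simp: disk_power_def inner_complex_def algebra_simps)

definition gdisk_of_symbol :: "svec \<Rightarrow> gdisk" where
  "gdisk_of_symbol t =
     (if sa t > 0 then Disk (sxy t / of_real (sa t)) (1 / sa t)
      else if sa t < 0 then CoDisk (sxy t / of_real (sa t)) (- 1 / sa t)
      else HalfPlane (sxy t) (sac t / 2))"

lemma gdisk_of_symbol_correct:
  assumes "lorentz t t = 1"
  shows "valid_gdisk (gdisk_of_symbol t)" "symbol (gdisk_of_symbol t) = t"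
proof -
  have N: "(sx t)^2 + (sy t)^2 - sa t * sac t = 1" using assms by (simp add: lorentz_def power2_eq_square)
  consider "sa t \<noteq> 0" | "sa t = 0" by blast
  then have "valid_gdisk (gdisk_of_symbol t) \<and> symbol (gdisk_of_symbol t) = t"
  proof cases
    case 1
    then have "sac t = ((sx t)^2 + (sy t)^2 - 1) / sa t" using N by (simp add: field_simps)
    then show ?thesis using 1 N
      by (simp add: gdisk_of_symbol_def svec_eq_iff sxy_def Let_def Re_divide Im_divide
          power2_eq_square field_simps) algebra
  next
    case 2
    then have "norm (sxy t) = 1" using N by (simp add: sxy_def cmod_def)
    then show ?thesis using 2 by (simp add: gdisk_of_symbol_def svec_eq_iff sxy_def)
  qed
  then show "valid_gdisk (gdisk_of_symbol t)" "symbol (gdisk_of_symbol t) = t" by simp_all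
qed

lemma gdisk_of_symbol_symbol: "valid_gdisk X \<Longrightarrow> gdisk_of_symbol (symbol X) = X"
  by (induction X rule: valid_gdisk.induct)
    (simp_all add: gdisk_of_symbol_def Let_def sxy_def complex_eq_iff Re_divide Im_divide field_simps)

lemma symbol_inj: "valid_gdisk X \<Longrightarrow> valid_gdisk Y \<Longrightarrow> symbol X = symbol Y \<Longrightarrow> X = Y"
  by (metis gdisk_of_symbol_symbol)

lemma inner_unit_self: "norm (n::complex) = 1 \<Longrightarrow> inner n n = 1"
  by (metis power2_norm_eq_inner power_one)

lemma not_bounded_ray:
  fixes n :: complex
  assumes "norm n = 1" and ray: "\<And>t. t \<ge> t0 \<Longrightarrow> t *\<^sub>R n \<in> S"
  shows "\<not> bounded S"
proof
  assume "bounded S"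
  then obtain B where B: "\<And>x. x \<in> S \<Longrightarrow> norm x \<le> B" by (auto simp: bounded_iff)
  have "norm ((max t0 B + 1) *\<^sub>R n) \<le> B" by (rule B[OF ray]) simp
  then show False using assms(1) by simp
qed

lemma not_bounded_halfplanes:
  fixes n :: complex
  assumes "norm n = 1"
  shows "\<not> bounded {p. h \<le> inner p n}" "\<not> bounded {p. inner p n < h}"
proof -
  have nn: "inner n n = 1" using inner_unit_self[OF assms] .
  show "\<not> bounded {p. h \<le> inner p n}"
    by (rule not_bounded_ray[OF assms, of h]) (simp add: nn)
  show "\<not> bounded {p. inner p n < h}"
    by (rule not_bounded_ray[of "- n" "\<bar>h\<bar> + 1"]) (use assms nn in auto)
qed

lemma not_bounded_Compl_cball: "\<not> bounded (- cball (c::complex) r)"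
proof (rule not_bounded_ray[of 1 "norm c + r + 1"])
  fix t :: real assume "norm c + r + 1 \<le> t"
  moreover have "t - norm c \<le> dist c (t *\<^sub>R 1)"
    using norm_triangle_ineq2[of "t *\<^sub>R 1" c] by (simp add: dist_norm norm_minus_commute)
  ultimately show "t *\<^sub>R 1 \<in> - cball c r" by simp
qed simp

lemma not_bounded_Compl_ball: "\<not> bounded (- ball (c::complex) r)"
  using not_bounded_Compl_cball bounded_subset by (metis ComplI ComplD ball_subset_cball subset_iff)

lemma bounded_gset_iff: "valid_gdisk X \<Longrightarrow> bounded (gset X) \<longleftrightarrow> (\<exists>c r. X = Disk c r)"
  by (cases X) (auto simp: not_bounded_Compl_ball not_bounded_halfplanes)

lemma bounded_Compl_gset_iff:
  assumes "valid_gdisk X"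
  shows "bounded (- gset X) \<longleftrightarrow> (\<exists>c r. X = CoDisk c r)"
proof (cases X)
  case (HalfPlane n h)
  moreover have "- {p. h \<le> inner p n} = {p. inner p n < h}" by auto
  ultimately show ?thesis using assms by (auto simp: not_bounded_halfplanes)
qed (auto simp: not_bounded_Compl_cball)

lemma lower_bounded_affine_imp_const:
  fixes a b k :: real
  assumes "\<And>t. k \<le> a + t * b"
  shows "b = 0"
proof (rule ccontr)
  assume "b \<noteq> 0"
  then have "a + ((k - a - 1) / b) * b = k - 1" by simp
  then show False using assms[of "(k - a - 1) / b"] by simp
qed

lemma unit_perp_imp_eq_or_neg:
  fixes n m :: complex
  assumes "norm n = 1" "norm m = 1" "inner (\<i> * n) m = 0"
  shows "m = n \<or> m = - n"
proof -
  define z where "z = cnj n * m"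
  have "Im z = 0" using assms(3) by (simp add: z_def inner_complex_def algebra_simps)
  moreover have "norm z = 1" using assms(1,2) by (simp add: z_def norm_mult)
  ultimately have "z = 1 \<or> z = -1" by (auto simp: cmod_eq_Re complex_eq_iff abs_if split: if_splits)
  moreover have "n * cnj n = 1" using complex_norm_square[of n] assms(1) by simp
  then have "n * z = m" by (simp add: z_def mult.assoc[symmetric])
  ultimately show ?thesis by auto
qed

lemma halfplane_eq_imp_eq:
  fixes n m :: complex
  assumes n: "norm n = 1" and m: "norm m = 1" and eq: "{p. h \<le> inner p n} = {p. k \<le> inner p m}"
  shows "n = m \<and> h = k"
proof -
  have mem: "h \<le> inner p n \<longleftrightarrow> k \<le> inner p m" for p using eq by blast
  have nn: "inner n n = 1" using inner_unit_self[OF n] .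
  have "inner (\<i> * n) n = 0" by (simp add: inner_complex_def)
  then have "k \<le> inner (h *\<^sub>R n) m + t * inner (\<i> * n) m" for t
    using mem[of "h *\<^sub>R n + t *\<^sub>R (\<i> * n)"] nn by (simp add: inner_add_left)
  then have "inner (\<i> * n) m = 0"
    by (rule lower_bounded_affine_imp_const)
  then consider "m = n" | "m = - n" using unit_perp_imp_eq_or_neg[OF n m] by blast
  then have "m = n"
  proof cases
    case 2
    let ?p = "(\<bar>h\<bar> + \<bar>k\<bar> + 1) *\<^sub>R n"
    have "h \<le> inner ?p n" "inner ?p m < k" using 2 nn by auto
    then show ?thesis using mem[of ?p] by simp
  qed
  moreover have "h \<le> k" "k \<le> h" using mem[of "h *\<^sub>R n"] mem[of "k *\<^sub>R n"] nn \<open>m = n\<close> by simp_all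
  ultimately show ?thesis by simp
qed

lemma gset_inj:
  assumes vX: "valid_gdisk X" and vY: "valid_gdisk Y" and eq: "gset X = gset Y"
  shows "X = Y"
proof (cases X)
  case (Disk c r)
  then obtain c' r' where "Y = Disk c' r'" using eq bounded_gset_iff[OF vX] bounded_gset_iff[OF vY] by auto
  then show ?thesis using Disk vX vY eq by (auto simp: cball_eq_cball_iff)
next
  case (CoDisk c r)
  then obtain c' r' where "Y = CoDisk c' r'"
    using eq bounded_Compl_gset_iff[OF vX] bounded_Compl_gset_iff[OF vY] by auto
  then show ?thesis using CoDisk vX vY eq by (auto simp: ball_eq_ball_iff)
next
  case (HalfPlane n h)
  have "\<nexists>c r. Y = Disk c r" "\<nexists>c r. Y = CoDisk c r"
    using HalfPlane eq bounded_gset_iff[OF vX] bounded_gset_iff[OF vY]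
      bounded_Compl_gset_iff[OF vX] bounded_Compl_gset_iff[OF vY] by auto
  then obtain m k where "Y = HalfPlane m k" by (cases Y) auto
  then show ?thesis using HalfPlane vX vY eq halfplane_eq_imp_eq[of n m h k] by auto
qed

section \<open>Tangency\<close>

lemma lorentz_Disk_Disk:
  "r > 0 \<Longrightarrow> r' > 0 \<Longrightarrow>
     lorentz (symbol (Disk c r)) (symbol (Disk c' r')) = (r^2 + r'^2 - (dist c c')^2) / (2 * r * r')"
  unfolding dist_sq_coords by (simp add: lorentz_def Let_def power2_eq_square field_simps)

lemma lorentz_Disk_CoDisk:
  "r > 0 \<Longrightarrow> r' > 0 \<Longrightarrow>
     lorentz (symbol (Disk c r)) (symbol (CoDisk c' r')) = ((dist c c')^2 - r^2 - r'^2) / (2 * r * r')"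
  unfolding dist_sq_coords by (simp add: lorentz_def Let_def power2_eq_square field_simps)

lemma lorentz_Disk_HalfPlane:
  "r > 0 \<Longrightarrow> lorentz (symbol (Disk c r)) (symbol (HalfPlane n h)) = (inner c n - h) / r"
  by (simp add: lorentz_def Let_def inner_complex_def field_simps)

lemma lorentz_HalfPlane_HalfPlane: "lorentz (symbol (HalfPlane n h)) (symbol (HalfPlane m k)) = inner n m"
  by (simp add: lorentz_def inner_complex_def)

lemma interior_Compl_ball: "r > 0 \<Longrightarrow> interior (- ball c r) = - cball (c::complex) r"
  by (simp add: interior_complement)

lemma interior_halfplane:
  assumes "norm n = 1"
  shows "interior {p. h \<le> inner p n} = {p::complex. h < inner p n}"
proof -
  have "interior {p::complex. h \<le> inner p n} = interior {p. h \<le> n \<bullet> p}" by (simp add: inner_commute)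
  also have "\<dots> = {p. h < n \<bullet> p}" using assms by (intro interior_halfspace_ge) auto
  finally show ?thesis by (simp add: inner_commute)
qed

lemma frontier_halfplane:
  assumes "norm n = 1"
  shows "frontier {p. h \<le> inner p n} = {p::complex. inner p n = h}"
proof -
  have "frontier {p::complex. h \<le> inner p n} = frontier {p. h \<le> n \<bullet> p}" by (simp add: inner_commute)
  also have "\<dots> = {p. n \<bullet> p = h}" using assms by (intro frontier_halfspace_ge) auto
  finally show ?thesis by (simp add: inner_commute)
qed

lemma disjoint_balls_imp_dist_ge:
  fixes c c' :: "'a::real_normed_vector"
  assumes "ball c r \<inter> ball c' r' = {}" "r > 0" "r' > 0"
  shows "r + r' \<le> dist c c'"
proof (rule ccontr)
  assume "\<not> r + r' \<le> dist c c'"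
  then have "r * dist c c' < r * (r + r')" "r' * dist c c' < r' * (r + r')" using assms(2,3) by simp_all
  define k where "k = r / (r + r')"
  have k: "0 \<le> k" "k \<le> 1" "k * dist c c' < r" "(1 - k) * dist c c' < r'"
    using \<open>r * dist c c' < r * (r + r')\<close> \<open>r' * dist c c' < r' * (r + r')\<close> assms(2,3)
    by (auto simp: k_def field_simps)
  let ?q = "c + k *\<^sub>R (c' - c)"
  have "dist c ?q = k * dist c c'" using k by (simp add: dist_norm norm_minus_commute)
  moreover have "c' - ?q = (1 - k) *\<^sub>R (c' - c)" by (simp add: algebra_simps)
  then have "dist c' ?q = (1 - k) * dist c c'" using k by (simp add: dist_norm norm_minus_commute)
  ultimately have "?q \<in> ball c r \<inter> ball c' r'" using k by simp
  then show False using assms(1) by blast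
qed

lemma disk_tangent_halfplane:
  fixes c n p :: complex
  assumes "r > 0" "norm n = 1" "ball c r \<inter> {p. h < inner p n} = {}" "dist c p = r" "inner p n = h"
  shows "h = inner c n + r"
proof -
  have "inner c n + r \<le> h"
  proof (rule ccontr)
    assume "\<not> ?thesis"
    define s where "s = (r + max 0 (h - inner c n)) / 2"
    have s: "0 \<le> s" "s < r" "h < inner c n + s"
      using \<open>\<not> inner c n + r \<le> h\<close> assms(1) by (auto simp: s_def field_simps)
    then have "c + s *\<^sub>R n \<in> ball c r \<inter> {p. h < inner p n}"
      using assms(2) inner_unit_self[OF assms(2)] by (simp add: dist_norm inner_add_left)
    then show False using assms(3) by blast
  qed
  moreover have "h \<le> inner c n + r"
  proof -
    have "h = inner c n + inner (p - c) n" using assms(5) by (simp add: inner_diff_left)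
    also have "\<dots> \<le> inner c n + norm (p - c) * norm n" using norm_cauchy_schwarz[of "p - c" n] by simp
    finally show ?thesis using assms(2,4) by (simp add: dist_norm norm_minus_commute)
  qed
  ultimately show ?thesis by simp
qed

lemma Compl_cballs_intersect: "- cball (c::complex) r \<inter> - cball c' r' \<noteq> {}"
proof
  assume "- cball c r \<inter> - cball c' r' = {}"
  then have "cball c r \<union> cball c' r' = UNIV" by auto
  then show False using not_bounded_UNIV bounded_Un bounded_cball by metis
qed

lemma Compl_cball_halfplane_intersect:
  fixes n :: complex
  assumes "norm n = 1"
  shows "- cball c r \<inter> {p. h < inner p n} \<noteq> {}"
proof
  assume "- cball c r \<inter> {p. h < inner p n} = {}"
  then have "{p. h + 1 \<le> inner p n} \<subseteq> cball c r" by auto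
  then show False using not_bounded_halfplanes(1)[OF assms] bounded_subset bounded_cball by metis
qed

lemma disjoint_halfplanes_imp_opposite:
  fixes n m :: complex
  assumes "norm n = 1" "norm m = 1" "{p. h < inner p n} \<inter> {p. k < inner p m} = {}"
  shows "inner n m = -1"
proof (rule ccontr)
  assume "inner n m \<noteq> -1"
  moreover have "- 1 \<le> inner n m" using norm_cauchy_schwarz[of "-n" m] assms(1,2) by simp
  ultimately have pos: "1 + inner n m > 0" by simp
  define t where "t = (\<bar>h\<bar> + \<bar>k\<bar> + 1) / (1 + inner n m)"
  have t: "t * (1 + inner n m) = \<bar>h\<bar> + \<bar>k\<bar> + 1" using pos by (simp add: t_def)
  have "inner (t *\<^sub>R (n + m)) n = t * (1 + inner n m)" "inner (t *\<^sub>R (n + m)) m = t * (1 + inner n m)"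
    using inner_unit_self[OF assms(1)] inner_unit_self[OF assms(2)]
    by (simp_all add: inner_add_left inner_commute[of m n] algebra_simps)
  then have "t *\<^sub>R (n + m) \<in> {p. h < inner p n} \<inter> {p. k < inner p m}" using t by auto
  then show False using assms(3) by blast
qed

lemma tangent_commute: "tangent A B \<Longrightarrow> tangent B A"
  unfolding tangent_def by (auto simp: Int_commute)

lemma tangent_Disk_imp_lorentz:
  assumes vD: "valid_gdisk (Disk c r)" and vY: "valid_gdisk Y" and tan: "tangent (Disk c r) Y"
  shows "lorentz (symbol (Disk c r)) (symbol Y) = -1"
proof -
  have r: "r > 0" using vD by simp
  have disj: "ball c r \<inter> interior (gset Y) = {}"
    and "\<exists>p. p \<in> sphere c r \<and> p \<in> frontier (gset Y)"
    using tan by (auto simp: tangent_def is_halfplane_def )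
  then obtain p where p: "dist c p = r" "p \<in> frontier (gset Y)" by auto
  show ?thesis
  proof (cases Y)
    case (Disk c' r')
    then have r': "r' > 0" using vY by simp
    have "r + r' \<le> dist c c'" using disjoint_balls_imp_dist_ge disj Disk r r' by (simp add: interior_Compl_ball interior_halfplane)
    moreover have "dist c c' \<le> r + r'"
      using p Disk dist_triangle[of c c' p] by (simp add: frontier_halfplane dist_commute)
    ultimately have "dist c c' = r + r'" by simp
    then have "(r^2 + r'^2 - (dist c c')^2) / (2 * r * r') = -1"
      using r r' by (simp add: power2_eq_square field_simps)
    then show ?thesis using Disk lorentz_Disk_Disk[OF r r', of c c'] by simp
  next
    case (CoDisk c' r')
    then have r': "r' > 0" using vY by simp
    have "ball c r \<subseteq> cball c' r'" using disj CoDisk r' by (auto simp: interior_Compl_ball interior_halfplane)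
    then have "dist c c' + r \<le> r'" using r by (simp add: ball_subset_cball_iff)
    moreover have "r' \<le> dist c c' + r"
      using p CoDisk r' dist_triangle[of c' p c] by (simp add: frontier_halfplane dist_commute)
    ultimately have d: "dist c c' = r' - r" by simp
    have "((dist c c')^2 - r^2 - r'^2) / (2 * r * r') = -1"
      using r r' unfolding d by (simp add: power2_eq_square field_simps)
    then show ?thesis using CoDisk lorentz_Disk_CoDisk[OF r r', of c c'] by simp
  next
    case (HalfPlane n h)
    then have n: "norm n = 1" using vY by simp
    then have "h = inner c n + r"
      using disk_tangent_halfplane[OF r n] disj p HalfPlane by (simp add: interior_Compl_ball interior_halfplane frontier_halfplane)
    then show ?thesis using HalfPlane r lorentz_Disk_HalfPlane[OF r, of c n h] by simp
  qed
qed

lemma tangent_imp_lorentz: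
  assumes vA: "valid_gdisk A" and vB: "valid_gdisk B" and tan: "tangent A B"
  shows "lorentz (symbol A) (symbol B) = -1"
proof -
  have disj: "interior (gset A) \<inter> interior (gset B) = {}" using tan by (simp add: tangent_def)
  have Disk_right: "lorentz (symbol A) (symbol (Disk c r)) = -1" if "B = Disk c r" for c r
    using tangent_Disk_imp_lorentz[of c r A] vA vB tan that by (simp add: tangent_commute lorentz_commute)
  show ?thesis
  proof (cases A)
    case (Disk c r)
    then show ?thesis using tangent_Disk_imp_lorentz vA vB tan by simp
  next
    case (CoDisk c r)
    then show ?thesis using vA vB disj Disk_right Compl_cballs_intersect
        Compl_cball_halfplane_intersect
      by (cases B) (auto simp: interior_Compl_ball interior_halfplane)
  next
    case (HalfPlane n h)
    show ?thesis
    proof (cases B)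
      case (HalfPlane m k)
      then have "inner n m = -1"
        using \<open>A = HalfPlane n h\<close> vA vB disj disjoint_halfplanes_imp_opposite[of n m h k]
        by (simp add: interior_halfplane)
      then show ?thesis using HalfPlane \<open>A = HalfPlane n h\<close> lorentz_HalfPlane_HalfPlane by simp
    qed (use HalfPlane vA vB disj Disk_right Compl_cball_halfplane_intersect in
        \<open>auto simp: interior_Compl_ball interior_halfplane Int_commute\<close>)
  qed
qed

section \<open>Inversion\<close>

definition lreflect :: "svec \<Rightarrow> svec \<Rightarrow> svec" where
  "lreflect t x = x - (2 * lorentz t x) *\<^sub>R t"

lemma lorentz_lreflect: "lorentz t t = 1 \<Longrightarrow> lorentz (lreflect t x) (lreflect t x) = lorentz x x"
  by (simp add: lreflect_def lorentz_commute[of x t] algebra_simps)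

lemma lreflect_uminus: "lreflect (- t) x = lreflect t x"
  by (simp add: lreflect_def)

definition circle_inversion :: "complex \<Rightarrow> real \<Rightarrow> complex \<Rightarrow> complex" where
  "circle_inversion c r p = c + (r\<^sup>2) / cnj (p - c)"

definition line_reflection :: "complex \<Rightarrow> real \<Rightarrow> complex \<Rightarrow> complex" where
  "line_reflection n h p = p - (2 * (inner p n - h)) *\<^sub>R n"

lemma image_involution:
  assumes "\<And>p. p \<in> D \<Longrightarrow> f p \<in> D \<and> f (f p) = p"
  shows "f ` (S \<inter> D) = {q \<in> D. f q \<in> S}"
  using assms by (auto intro!: rev_image_eqI)

lemma circle_inversion_involution:
  assumes "r > 0" "p \<noteq> c"
  shows "circle_inversion c r p \<noteq> c" "circle_inversion c r (circle_inversion c r p) = p"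
proof -
  have "circle_inversion c r p - c = of_real (r^2) / cnj (p - c)" by (simp add: circle_inversion_def)
  moreover have "of_real (r^2) / cnj (p - c) \<noteq> 0" using assms by simp
  ultimately show "circle_inversion c r p \<noteq> c"
    and "circle_inversion c r (circle_inversion c r p) = p"
    using assms by (auto simp: circle_inversion_def)
qed

lemma line_reflection_involution:
  assumes "norm n = 1"
  shows "line_reflection n h (line_reflection n h p) = p"
  using inner_unit_self[OF assms]
  by (simp add: line_reflection_def inner_diff_left algebra_simps)

text \<open>The power with respect to a generalized circle transforms under inversion in a circle
  (reflection in a line) by the Lorentz reflection in the symbol of that circle (line).\<close>

lemma disk_power_circle_inversion:
  assumes "r > 0" "p \<noteq> c"
  shows "disk_power x (circle_inversion c r p) * (dist c p)^2
       = r^2 * disk_power (lreflect (symbol (Disk c r)) x) p"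
proof -
  define D where "D = (Re p - Re c)^2 + (Im p - Im c)^2"
  have D: "D > 0" using assms(2) by (simp add: D_def complex_eq_iff sum_power2_gt_zero_iff)
  have "Re (of_real k / cnj w) = k * Re w / ((Re w)^2 + (Im w)^2)"
    "Im (of_real k / cnj w) = k * Im w / ((Re w)^2 + (Im w)^2)" for k w
    by (simp_all add: Re_divide Im_divide power2_eq_square)
  from this[of "r^2" "p - c"]
  have coords: "Re (circle_inversion c r p) = Re c + r^2 * (Re p - Re c) / D"
    "Im (circle_inversion c r p) = Im c + r^2 * (Im p - Im c) / D"
    by (simp_all add: circle_inversion_def D_def)
  have "disk_power x (circle_inversion c r p) * D = r^2 * disk_power (lreflect (symbol (Disk c r)) x) p"
    using D assms(1) unfolding disk_power_def coords
    apply (simp add: lreflect_def lorentz_def Let_def power2_eq_square field_simps)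
    unfolding D_def power2_eq_square
    apply algebra
    done
  then show ?thesis by (simp add: D_def dist_sq_coords)
qed

lemma disk_power_line_reflection:
  assumes "norm n = 1"
  shows "disk_power x (line_reflection n h q) = disk_power (lreflect (symbol (HalfPlane n h)) x) q"
proof -
  have "(Re n)^2 + (Im n)^2 = 1" using assms by (simp add: cmod_def)
  then show ?thesis
    by (simp add: disk_power_def line_reflection_def lreflect_def lorentz_def inner_complex_def
        power2_eq_square algebra_simps) algebra
qed

lemma closure_Diff_singleton_perfect:
  assumes "closed S" "\<And>x. x \<in> S \<Longrightarrow> x islimpt S"
  shows "closure (S - {z}) = S"
proof
  show "closure (S - {z}) \<subseteq> S" using assms(1) by (simp add: closure_minimal)
  show "S \<subseteq> closure (S - {z})"
  proof
    fix x assume "x \<in> S"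
    show "x \<in> closure (S - {z})"
    proof (cases "x = z")
      case True
      then show ?thesis using assms(2)[OF \<open>x \<in> S\<close>] by (simp add: islimpt_in_closure)
    next
      case False
      then have "x \<in> S - {z}" using \<open>x \<in> S\<close> by simp
      then show ?thesis by (rule subsetD[OF closure_subset])
    qed
  qed
qed

lemma closed_gset: "valid_gdisk X \<Longrightarrow> closed (gset X)"
  unfolding gset_eq_disk_power disk_power_def by (intro closed_Collect_le continuous_intros)

lemma gset_islimpt:
  assumes "valid_gdisk X" "z \<in> gset X"
  shows "z islimpt gset X"
proof (cases X)
  case (Disk c r)
  then have "gset X = closure (ball c r)" using assms(1) by simp
  then show ?thesis using islimpt_closure_open[OF open_ball _ assms(2)] by blast
next
  case (CoDisk c r)
  then have "gset X = closure (- cball c r)" by (simp add: closure_complement)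
  then show ?thesis using islimpt_closure_open[OF open_Compl[OF closed_cball] _ assms(2)] by blast
next
  case (HalfPlane n h)
  then have "n \<noteq> 0" using assms by auto
  have "gset X = {p. h \<le> n \<bullet> p}" using HalfPlane by (simp add: inner_commute)
  also have "\<dots> = closure {p. h < n \<bullet> p}" using \<open>n \<noteq> 0\<close> by simp
  finally show ?thesis using islimpt_closure_open[OF open_halfspace_gt _ assms(2)] by blast
qed

lemma gset_gdisk_of_symbol:
  "lorentz t t = 1 \<Longrightarrow> gset (gdisk_of_symbol t) = {p. disk_power t p \<le> 0}"
  using gset_eq_disk_power gdisk_of_symbol_correct by metis

lemma closure_circle_inversion_gset:
  assumes r: "r > 0" and vX: "valid_gdisk X"
  shows "closure (circle_inversion c r ` (gset X - {c}))
       = gset (gdisk_of_symbol (lreflect (symbol (Disk c r)) (symbol X)))"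
proof -
  define y where "y = lreflect (symbol (Disk c r)) (symbol X)"
  have y: "lorentz y y = 1"
    unfolding y_def using lorentz_lreflect lorentz_symbol_self vX r by (metis valid_gdisk.simps(1))
  have "circle_inversion c r ` (gset X \<inter> - {c}) = {q \<in> - {c}. circle_inversion c r q \<in> gset X}"
    using circle_inversion_involution[OF r] by (intro image_involution) auto
  also have "\<dots> = {q. disk_power y q \<le> 0} - {c}"
  proof -
    have "circle_inversion c r q \<in> gset X \<longleftrightarrow> disk_power y q \<le> 0" if "q \<noteq> c" for q
    proof -
      have "circle_inversion c r q \<in> gset X \<longleftrightarrow> disk_power (symbol X) (circle_inversion c r q) \<le> 0"
        using gset_eq_disk_power[OF vX] by simp
      also have "\<dots> \<longleftrightarrow> disk_power (symbol X) (circle_inversion c r q) * (dist c q)^2 \<le> 0"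
        using that by (simp add: mult_le_0_iff)
      also have "\<dots> \<longleftrightarrow> r^2 * disk_power y q \<le> 0"
        unfolding y_def disk_power_circle_inversion[OF r that] ..
      also have "\<dots> \<longleftrightarrow> disk_power y q \<le> 0" using r by (simp add: mult_le_0_iff)
      finally show ?thesis .
    qed
    then show ?thesis by auto
  qed
  finally show ?thesis
    using closure_Diff_singleton_perfect gdisk_of_symbol_correct[OF y] closed_gset gset_islimpt
      gset_gdisk_of_symbol[OF y]
    unfolding y_def[symmetric] by (metis Diff_eq)
qed

lemma line_reflection_gset:
  assumes n: "norm n = 1" and vX: "valid_gdisk X"
  shows "line_reflection n h ` gset X = gset (gdisk_of_symbol (lreflect (symbol (HalfPlane n h)) (symbol X)))"
    (is "_ = gset (gdisk_of_symbol ?y)")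
proof -
  have y: "lorentz ?y ?y = 1"
    using lorentz_lreflect lorentz_symbol_self vX n by (metis valid_gdisk.simps(3))
  have "line_reflection n h ` (gset X \<inter> UNIV) = {q \<in> UNIV. line_reflection n h q \<in> gset X}"
    using line_reflection_involution[OF n] by (intro image_involution) auto
  then show ?thesis
    using gset_eq_disk_power[OF vX] gset_gdisk_of_symbol[OF y] disk_power_line_reflection[OF n] by simp
qed

lemma symbol_inversion_image:
  assumes vA: "valid_gdisk A" and vX: "valid_gdisk X" and vX': "valid_gdisk X'"
    and img: "gset X' = inversion_image A (gset X)"
  shows "symbol X' = lreflect (symbol A) (symbol X)"
proof -
  have y: "lorentz (lreflect (symbol A) (symbol X)) (lreflect (symbol A) (symbol X)) = 1"
    using lorentz_lreflect lorentz_symbol_self vA vX by metis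
  have "gset X' = gset (gdisk_of_symbol (lreflect (symbol A) (symbol X)))"
  proof (cases A)
    case (Disk c r)
    have "inversion_image A (gset X) = closure (circle_inversion c r ` (gset X - {c}))"
      unfolding Disk inversion_image.simps circle_inversion_def[abs_def] ..
    then show ?thesis using img vA Disk closure_circle_inversion_gset[OF _ vX, of r c] by simp
  next
    case (CoDisk c r)
    have "inversion_image A (gset X) = closure (circle_inversion c r ` (gset X - {c}))"
      unfolding CoDisk inversion_image.simps circle_inversion_def[abs_def] ..
    moreover have "lreflect (symbol A) (symbol X) = lreflect (symbol (Disk c r)) (symbol X)"
      unfolding CoDisk symbol_CoDisk lreflect_uminus ..
    ultimately show ?thesis using img vA CoDisk closure_circle_inversion_gset[OF _ vX, of r c] by simp
  next
    case (HalfPlane n h)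
    have "inversion_image A (gset X) = line_reflection n h ` gset X"
      unfolding HalfPlane inversion_image.simps line_reflection_def[abs_def] ..
    then show ?thesis using img vA HalfPlane line_reflection_gset[OF _ vX, of n h] by simp
  qed
  then have "X' = gdisk_of_symbol (lreflect (symbol A) (symbol X))"
    using gset_inj vX' gdisk_of_symbol_correct(1)[OF y] by blast
  then show ?thesis using gdisk_of_symbol_correct(2)[OF y] by simp
qed

section \<open>Descartes configurations\<close>

lemma symbol_inversion_image_self:
  assumes "valid_gdisk A" "valid_gdisk A'" "gset A' = inversion_image A (gset A)"
  shows "symbol A' = - symbol A"
  using symbol_inversion_image[OF assms(1,1,2,3)] lorentz_symbol_self[OF assms(1)]
  by (simp add: lreflect_def scaleR_2)

lemma symbol_inversion_image_tangent:
  assumes "valid_gdisk A" "valid_gdisk X" "valid_gdisk X'" "tangent A X"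
    and "gset X' = inversion_image A (gset X)"
  shows "symbol X' = symbol X + 2 *\<^sub>R symbol A"
  using symbol_inversion_image[OF assms(1-3,5)] tangent_imp_lorentz[OF assms(1,2,4)]
  by (simp add: lreflect_def)

lemma descartes_quad_symbol:
  "descartes_config A B C D \<Longrightarrow> descartes_quad (symbol A) (symbol B) (symbol C) (symbol D)"
  using lorentz_symbol_self tangent_imp_lorentz
  unfolding descartes_config_def descartes_quad_def descartes_triple_def by auto

lemma symbol_descartes_conjugate:
  assumes conf: "descartes_config A B C D" and conj: "descartes_conjugate A B C D D'"
  shows "symbol D' = 2 *\<^sub>R (symbol A + symbol B + symbol C) - symbol D"
proof -
  have vD': "valid_gdisk D'" and "gset D' \<noteq> gset D"
    using conj by (auto simp: descartes_conjugate_def)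
  then have "symbol D' \<noteq> symbol D" using symbol_inj conf by (auto simp: descartes_config_def)
  moreover have "symbol D' = symbol D \<or> symbol D' = 2 *\<^sub>R (symbol A + symbol B + symbol C) - symbol D"
    using conf conj lorentz_symbol_self[OF vD'] tangent_imp_lorentz
    by (intro descartes_quad_fourth_cases descartes_quad_symbol)
      (auto simp: descartes_config_def descartes_conjugate_def)
  ultimately show ?thesis by simp
qed

lemma descartes_conjugate_integral_gaussian:
  assumes conf: "descartes_config A B C D"
    and int: "integral_symbol A" "integral_symbol B" "integral_symbol C" "integral_symbol D"
    and spin: "all_spinors_gaussian A B C D"
    and conj: "descartes_conjugate A B C D D'"
  shows "descartes_config A B C D' \<and> integral_symbol D' \<and>
    symbol D + symbol D' = 2 *\<^sub>R (symbol A + symbol B + symbol C) \<and> all_spinors_gaussian A B C D'"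
proof -
  have D': "symbol D' = 2 *\<^sub>R (symbol A + symbol B + symbol C) - symbol D"
    by (rule symbol_descartes_conjugate[OF conf conj])
  have "descartes_config A B C D'" using conf conj by (simp add: descartes_config_def descartes_conjugate_def)
  moreover have "integral_symbol D'" using int unfolding integral_symbol_iff D' by simp
  moreover have "all_spinors_gaussian A B C D'"
    using all_spinsq_gaussian_conjugate[OF descartes_quad_symbol[OF conf]] spin
    unfolding all_spinors_gaussian_iff D' by blast
  ultimately show ?thesis using D' by simp
qed

lemma inversion_integral_gaussian:
  assumes conf: "descartes_config A B C D"
    and int: "integral_symbol A" "integral_symbol B" "integral_symbol C" "integral_symbol D"
    and spin: "all_spinors_gaussian A B C D"
    and valid: "valid_gdisk A'" "valid_gdisk B'" "valid_gdisk C'" "valid_gdisk D'"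
    and img: "gset A' = inversion_image A (gset A)" "gset B' = inversion_image A (gset B)"
      "gset C' = inversion_image A (gset C)" "gset D' = inversion_image A (gset D)"
  shows "symbol A' = - symbol A \<and> symbol B' = symbol B + 2 *\<^sub>R symbol A \<and>
    symbol C' = symbol C + 2 *\<^sub>R symbol A \<and> symbol D' = symbol D + 2 *\<^sub>R symbol A \<and>
    integral_symbol A' \<and> integral_symbol B' \<and> integral_symbol C' \<and> integral_symbol D' \<and>
    all_spinors_gaussian A' B' C' D'"
proof -
  have symbols: "symbol A' = - symbol A" "symbol B' = symbol B + 2 *\<^sub>R symbol A"
    "symbol C' = symbol C + 2 *\<^sub>R symbol A" "symbol D' = symbol D + 2 *\<^sub>R symbol A"
    using conf valid img symbol_inversion_image_self symbol_inversion_image_tangent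
    by (auto simp: descartes_config_def)
  moreover have "integral_symbol A' \<and> integral_symbol B' \<and> integral_symbol C' \<and> integral_symbol D'"
    using int unfolding integral_symbol_iff symbols by simp
  moreover have "all_spinors_gaussian A' B' C' D'"
    using all_spinsq_gaussian_inversion[OF descartes_quad_symbol[OF conf]] spin
    unfolding all_spinors_gaussian_iff symbols by blast
  ultimately show ?thesis by blast
qed

theorem mainTheorem6:
  fixes A B C D :: gdisk
  assumes conf: "descartes_config A B C D"
    and intA: "integral_symbol A" and intB: "integral_symbol B"
    and intC: "integral_symbol C" and intD: "integral_symbol D"
    and spin: "all_spinors_gaussian A B C D"
  shows
    "(\<forall>D'. descartes_conjugate A B C D D' \<longrightarrow>
        descartes_config A B C D' \<and>
        integral_symbol D' \<and>
        symbol D + symbol D' = 2 *\<^sub>R (symbol A + symbol B + symbol C) \<and>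
        all_spinors_gaussian A B C D')
     \<and>
     (\<forall>A' B' C' D'.
        valid_gdisk A' \<and> valid_gdisk B' \<and> valid_gdisk C' \<and> valid_gdisk D' \<and>
        gset A' = inversion_image A (gset A) \<and> gset B' = inversion_image A (gset B) \<and>
        gset C' = inversion_image A (gset C) \<and> gset D' = inversion_image A (gset D) \<longrightarrow>
        symbol A' = - symbol A \<and>
        symbol B' = symbol B + 2 *\<^sub>R symbol A \<and>
        symbol C' = symbol C + 2 *\<^sub>R symbol A \<and>
        symbol D' = symbol D + 2 *\<^sub>R symbol A \<and>
        integral_symbol A' \<and> integral_symbol B' \<and> integral_symbol C' \<and> integral_symbol D' \<and>
        all_spinors_gaussian A' B' C' D')"
  using descartes_conjugate_integral_gaussian[OF conf intA intB intC intD spin]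
    inversion_integral_gaussian[OF conf intA intB intC intD spin]
  by blast

end
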